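(* Let $D$ be a finite directed graph (parallel directed edges allowed, no loops) with nonempty vertex set $V$, in which every pair of adjacent vertices is joined by at least two directed edges (not necessarily in the same direction). Let $w:V\to\mathbb{N}^+$, and write $W=w[V]$ and $K=\alpha_w(D)$. Then $$\sum_{xy\in E(D)} w(x)\ \ge\ \frac{W^2}{K}-W,$$ where the sum runs over all directed edges $xy$ (directed from $x$ to $y$), counted with multiplicity.
   Context: For a function $f$ on a set $T$, $f[T]=\sum_{t\in T}f(t)$. Two vertices are adjacent if there is at least one directed edge between them (in either direction). $\alpha_w(D)$ is the maximum of $w[I]$ over all sets $I\subseteq V$ of pairwise non-adjacent vertices. *)

theory Defs
  imports Complex_Main "Graph_Theory.Digraph"
begin

definition adjacent :: "('a,'b) pre_digraph \<Rightarrow> 'a \<Rightarrow> 'a \<Rightarrow> bool" where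
  "adjacent G u v \<longleftrightarrow> (\<exists>e\<in>arcs G. (tail G e = u \<and> head G e = v) \<or> (tail G e = v \<and> head G e = u))"

definition arcs_between :: "('a,'b) pre_digraph \<Rightarrow> 'a \<Rightarrow> 'a \<Rightarrow> 'b set" where
  "arcs_between G u v = {e \<in> arcs G. (tail G e = u \<and> head G e = v) \<or> (tail G e = v \<and> head G e = u)}"

definition independent_set :: "('a,'b) pre_digraph \<Rightarrow> 'a set \<Rightarrow> bool" where
  "independent_set G I \<longleftrightarrow> I \<subseteq> verts G \<and> (\<forall>u\<in>I. \<forall>v\<in>I. \<not> adjacent G u v)"

definition alpha_w :: "('a,'b) pre_digraph \<Rightarrow> ('a \<Rightarrow> nat) \<Rightarrow> nat" where
  "alpha_w G w = Max {sum w I | I. independent_set G I}"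

end

theory Submission
  imports Defs
begin

(*
  Proof idea (weighted Turan-type bound by peeling off maximum independent sets).
  Write e(U) for the sum of w(tail e) over the arcs induced by U, and let k bound
  the weight of every independent subset of U.  We show  w[U]^2 <= k (e(U) + w[U])
  by strong induction on |U|.  Choose an independent I \<subseteq> U of maximum weight and
  put U' = U - I.  By maximality, every u \<in> U' has at least w(u) weight among its
  neighbours in I (exchange argument), and since adjacent vertices are joined by
  at least two arcs, the arcs between u and I carry tail weight >= 2 w(u).  These
  arcs lie in U but not in U', so e(U) >= e(U') + 2 w[U'].  Together with the
  induction hypothesis for U' and w[I] <= k, elementary arithmetic closes the step.
  For U = V and k = alpha_w(D) (positive, since V is nonempty) dividing by k
  yields the theorem.
*)

definition induced_arcs :: "('a,'b) pre_digraph \<Rightarrow> 'a set \<Rightarrow> 'b set" where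
  "induced_arcs D U = {e \<in> arcs D. tail D e \<in> U \<and> head D e \<in> U}"

lemma adjacent_sym: "adjacent D u v \<longleftrightarrow> adjacent D v u"
  unfolding adjacent_def by blast

lemma not_adjacent_self:
  assumes "loopfree_digraph D"
  shows "\<not> adjacent D u u"
  using loopfree_digraph.no_loops[OF assms] unfolding adjacent_def by metis

lemma independent_singleton:
  assumes "loopfree_digraph D" and "x \<in> verts D"
  shows "independent_set D {x}"
  using assms(2) not_adjacent_self[OF assms(1)] unfolding independent_set_def by auto

lemma independent_le_alpha_w:
  assumes "fin_digraph D" and "independent_set D I"
  shows "sum w I \<le> alpha_w D w"
proof -
  interpret fin_digraph D by (rule assms(1))
  have "{sum w J | J. independent_set D J} \<subseteq> sum w ` Pow (verts D)"
    unfolding independent_set_def by auto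
  then have "finite {sum w J | J. independent_set D J}"
    by (rule finite_subset) simp
  then show ?thesis
    unfolding alpha_w_def using assms(2) by (intro Max_ge) auto
qed

lemma exists_max_weight_independent:
  fixes w :: "'a \<Rightarrow> nat"
  assumes "finite U" and "U \<subseteq> verts D"
  obtains I where "I \<subseteq> U" "independent_set D I"
    "\<And>J. J \<subseteq> U \<Longrightarrow> independent_set D J \<Longrightarrow> sum w J \<le> sum w I"
proof -
  define F where "F = {J. J \<subseteq> U \<and> independent_set D J}"
  have "finite F" unfolding F_def using assms(1) by simp
  moreover have "{} \<in> F" unfolding F_def independent_set_def by simp
  ultimately have "Max (sum w ` F) \<in> sum w ` F" by (intro Max_in) auto
  then obtain I where I: "I \<in> F" "sum w I = Max (sum w ` F)" by auto
  have "sum w J \<le> sum w I" if "J \<subseteq> U" "independent_set D J" for J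
    unfolding I(2) using \<open>finite F\<close> that by (intro Max_ge) (auto simp: F_def)
  with I(1) that show ?thesis unfolding F_def by blast
qed

text \<open>Exchange argument: a vertex outside a maximum-weight independent set \<open>I\<close> has
  at least its own weight among its neighbours in \<open>I\<close>; otherwise swapping these
  neighbours for it would produce a heavier independent set.\<close>
lemma weight_le_neighbours:
  fixes w :: "'a \<Rightarrow> nat"
  assumes lf: "loopfree_digraph D" and U: "U \<subseteq> verts D" and fin: "finite U"
    and IU: "I \<subseteq> U" and indI: "independent_set D I"
    and maxI: "\<And>J. J \<subseteq> U \<Longrightarrow> independent_set D J \<Longrightarrow> sum w J \<le> sum w I"
    and u: "u \<in> U" "u \<notin> I"
  shows "w u \<le> sum w {v \<in> I. adjacent D u v}"
proof -
  define N where "N = {v \<in> I. adjacent D u v}"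
  define J where "J = insert u (I - N)"
  have finI: "finite I" using finite_subset[OF IU fin] .
  have "J \<subseteq> U" using u IU unfolding J_def by auto
  moreover have "independent_set D J"
    using indI U u IU not_adjacent_self[OF lf, of u] adjacent_sym[of D u]
    unfolding independent_set_def J_def N_def by blast
  ultimately have "sum w J \<le> sum w I" by (rule maxI)
  moreover have "sum w J = w u + sum w (I - N)" unfolding J_def using finI u by simp
  moreover have "sum w I = sum w (I - N) + sum w N"
    using sum.subset_diff[of N I w] finI unfolding N_def by auto
  ultimately show ?thesis unfolding N_def by simp
qed

lemma arcs_between_weight:
  fixes w :: "'a \<Rightarrow> nat"
  assumes "card (arcs_between D u v) \<ge> 2"
  shows "2 * min (w u) (w v) \<le> (\<Sum>e\<in>arcs_between D u v. w (tail D e))"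
proof -
  have "2 * min (w u) (w v) \<le> of_nat (card (arcs_between D u v)) * min (w u) (w v)"
    using assms by simp
  also have "\<dots> \<le> (\<Sum>e\<in>arcs_between D u v. w (tail D e))"
    by (rule sum_bounded_below) (auto simp: arcs_between_def)
  finally show ?thesis .
qed

lemma arcs_to_max_independent:
  fixes w :: "'a \<Rightarrow> nat"
  assumes fin: "fin_digraph D" and lf: "loopfree_digraph D"
    and two: "\<And>u v. u \<in> verts D \<Longrightarrow> v \<in> verts D \<Longrightarrow> adjacent D u v \<Longrightarrow> card (arcs_between D u v) \<ge> 2"
    and U: "U \<subseteq> verts D" and IU: "I \<subseteq> U" and indI: "independent_set D I"
    and maxI: "\<And>J. J \<subseteq> U \<Longrightarrow> independent_set D J \<Longrightarrow> sum w J \<le> sum w I"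
    and u: "u \<in> U" "u \<notin> I"
  shows "2 * w u \<le> (\<Sum>e\<in>(\<Union>v\<in>I. arcs_between D u v). w (tail D e))"
proof -
  interpret fin_digraph D by (rule fin)
  define g where "g v = (\<Sum>e\<in>arcs_between D u v. w (tail D e))" for v
  define N where "N = {v \<in> I. adjacent D u v}"
  have finU: "finite U" using finite_subset[OF U finite_verts] .
  have finI: "finite I" using finite_subset[OF IU finU] .
  have NI: "N \<subseteq> I" unfolding N_def by auto
  have bound: "2 * min (w u) (w v) \<le> g v" if "v \<in> N" for v
    unfolding g_def using that U IU u by (intro arcs_between_weight two) (auto simp: N_def)
  have "(\<Sum>e\<in>(\<Union>v\<in>I. arcs_between D u v). w (tail D e)) = sum g I"
    unfolding g_def using finI u by (intro sum.UNION_disjoint) (auto simp: arcs_between_def)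
  moreover have "2 * w u \<le> sum g N"
  proof (cases "\<exists>v\<in>N. w u \<le> w v")
    case True
    then obtain v where v: "v \<in> N" "w u \<le> w v" by blast
    then have "2 * w u \<le> g v" using bound[OF v(1)] by simp
    also have "\<dots> \<le> sum g N" using v(1) finI NI by (intro member_le_sum) (auto intro: finite_subset)
    finally show ?thesis .
  next
    case False
    have "w u \<le> sum w N"
      unfolding N_def using weight_le_neighbours[OF lf U finU IU indI maxI u] .
    then have "2 * w u \<le> (\<Sum>v\<in>N. 2 * w v)" by (simp add: sum_distrib_left[symmetric])
    also have "\<dots> \<le> sum g N"
      using bound False by (intro sum_mono) (metis min.absorb2 nat_le_linear)
    finally show ?thesis .
  qed
  moreover have "sum g N \<le> sum g I" using finI NI by (intro sum_mono2) auto
  ultimately show ?thesis by simp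
qed

lemma induced_arcs_split:
  fixes f :: "'b \<Rightarrow> nat"
  assumes fin: "fin_digraph D" and IU: "I \<subseteq> U" and finU: "finite U"
  shows "sum f (induced_arcs D (U - I)) + (\<Sum>u\<in>U - I. sum f (\<Union>v\<in>I. arcs_between D u v))
           \<le> sum f (induced_arcs D U)"
proof -
  interpret fin_digraph D by (rule fin)
  define A where "A u = (\<Union>v\<in>I. arcs_between D u v)" for u
  have finI: "finite I" using finite_subset[OF IU finU] .
  have finA: "finite (A u)" for u unfolding A_def arcs_between_def using finI by auto
  have union: "(\<Sum>u\<in>U - I. sum f (A u)) = sum f (\<Union>u\<in>U - I. A u)"
    using finU finA by (intro sum.UNION_disjoint[symmetric]) (auto simp: A_def arcs_between_def)
  have "sum f (induced_arcs D (U - I)) + (\<Sum>u\<in>U - I. sum f (A u))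
          = sum f (induced_arcs D (U - I) \<union> (\<Union>u\<in>U - I. A u))"
    unfolding union using finU finA by (intro sum.union_disjoint[symmetric])
      (auto simp: A_def arcs_between_def induced_arcs_def)
  also have "\<dots> \<le> sum f (induced_arcs D U)"
    using IU by (intro sum_mono2) (auto simp: A_def arcs_between_def induced_arcs_def)
  finally show ?thesis unfolding A_def .
qed

lemma peeling_arith:
  fixes W' a k S' S :: nat
  assumes IH: "W'^2 \<le> k * (S' + W')" and a: "a \<le> k" and S: "S' + 2 * W' \<le> S"
  shows "(W' + a)^2 \<le> k * (S + (W' + a))"
proof -
  have "(W' + a)^2 = W'^2 + 2 * (a * W') + a * a" by (simp add: power2_eq_square algebra_simps)
  also have "\<dots> \<le> k * (S' + W') + 2 * (k * W') + k * a"
    using IH a by (intro add_mono mult_right_mono) auto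
  also have "\<dots> = k * (S' + 2 * W') + k * W' + k * a" by (simp add: algebra_simps)
  also have "\<dots> \<le> k * S + k * W' + k * a" using S by simp
  also have "\<dots> = k * (S + (W' + a))" by (simp add: algebra_simps)
  finally show ?thesis .
qed

lemma peeling_bound:
  fixes w :: "'a \<Rightarrow> nat" and k :: nat
  assumes fin: "fin_digraph D" and lf: "loopfree_digraph D"
    and two: "\<And>u v. u \<in> verts D \<Longrightarrow> v \<in> verts D \<Longrightarrow> adjacent D u v \<Longrightarrow> card (arcs_between D u v) \<ge> 2"
    and pos: "\<And>x. x \<in> verts D \<Longrightarrow> w x > 0"
    and U: "U \<subseteq> verts D"
    and bound: "\<And>I. I \<subseteq> U \<Longrightarrow> independent_set D I \<Longrightarrow> sum w I \<le> k"
  shows "(sum w U)^2 \<le> k * ((\<Sum>e\<in>induced_arcs D U. w (tail D e)) + sum w U)"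
  using U bound
proof (induction "card U" arbitrary: U rule: less_induct)
  case less
  interpret fin_digraph D by (rule fin)
  have finU: "finite U" using finite_subset[OF less.prems(1) finite_verts] .
  show ?case
  proof (cases "U = {}")
    case True
    then show ?thesis by (simp add: induced_arcs_def)
  next
    case False
    then obtain x where x: "x \<in> U" by blast
    obtain I where IU: "I \<subseteq> U" and indI: "independent_set D I"
      and maxI: "\<And>J. J \<subseteq> U \<Longrightarrow> independent_set D J \<Longrightarrow> sum w J \<le> sum w I"
      using exists_max_weight_independent[OF finU less.prems(1)] by blast
    have "0 < w x" using pos x less.prems(1) by auto
    also have "w x \<le> sum w I"
      using maxI[of "{x}"] independent_singleton[OF lf] x less.prems(1) by auto
    finally have "I \<noteq> {}" by auto
    then have "card (U - I) < card U" using IU finU by (intro psubset_card_mono) auto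
    then have IH: "(sum w (U - I))^2 \<le> k * ((\<Sum>e\<in>induced_arcs D (U - I). w (tail D e)) + sum w (U - I))"
      using less.prems by (intro less.hyps) auto
    have "(\<Sum>u\<in>U - I. 2 * w u) \<le> (\<Sum>u\<in>U - I. \<Sum>e\<in>(\<Union>v\<in>I. arcs_between D u v). w (tail D e))"
      using arcs_to_max_independent[OF fin lf two less.prems(1) IU indI maxI]
      by (intro sum_mono) auto
    with induced_arcs_split[OF fin IU finU, of "\<lambda>e. w (tail D e)"]
    have arcs: "(\<Sum>e\<in>induced_arcs D (U - I). w (tail D e)) + 2 * sum w (U - I)
                  \<le> (\<Sum>e\<in>induced_arcs D U. w (tail D e))"
      by (simp add: sum_distrib_left)
    have "sum w U = sum w (U - I) + sum w I"
      using sum.subset_diff[OF IU finU] by simp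
    then show ?thesis
      using peeling_arith[OF IH less.prems(2)[OF IU indI] arcs] by simp
  qed
qed

theorem theorem3p2:
  fixes D :: "('a,'b) pre_digraph" and w :: "'a \<Rightarrow> nat"
  assumes "fin_digraph D"
    and "loopfree_digraph D"
    and "verts D \<noteq> {}"
    and "\<And>u v. u \<in> verts D \<Longrightarrow> v \<in> verts D \<Longrightarrow> adjacent D u v \<Longrightarrow> card (arcs_between D u v) \<ge> 2"
    and "\<And>x. x \<in> verts D \<Longrightarrow> w x > 0"
  shows "(\<Sum>e\<in>arcs D. real (w (tail D e))) \<ge>
           (real (sum w (verts D)))\<^sup>2 / real (alpha_w D w) - real (sum w (verts D))"
proof -
  define K where "K = alpha_w D w"
  define W where "W = sum w (verts D)"
  define S where "S = (\<Sum>e\<in>arcs D. w (tail D e))"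
  obtain x where x: "x \<in> verts D" using assms(3) by blast
  have "0 < w x" using assms(5)[OF x] .
  also have "w x \<le> K"
    using independent_le_alpha_w[OF assms(1) independent_singleton[OF assms(2) x]] by (simp add: K_def)
  finally have K_pos: "0 < K" .
  have "induced_arcs D (verts D) = arcs D"
    unfolding induced_arcs_def using assms(1) by (auto dest: fin_digraph.axioms wf_digraph.wellformed)
  moreover have "W^2 \<le> K * ((\<Sum>e\<in>induced_arcs D (verts D). w (tail D e)) + W)"
    unfolding W_def K_def
    by (rule peeling_bound[OF assms(1,2,4,5)]) (auto intro: independent_le_alpha_w[OF assms(1)])
  ultimately have "W^2 \<le> K * (S + W)" unfolding S_def by simp
  then have "real W ^ 2 \<le> real K * (real S + real W)" by (metis of_nat_add of_nat_le_iff of_nat_mult of_nat_power)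
  with K_pos have "real W ^ 2 / real K \<le> real S + real W" by (simp add: divide_le_eq mult.commute)
  then show ?thesis unfolding K_def W_def S_def by simp
qed

end
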